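(* Let $\ell>0$ and let $\alpha\in C^0([0,\ell/4],\mathbb{R}^3)$ have length $\mathscr{L}(\alpha)\in(0,\infty)$. Let $g:[0,\ell)\to\mathbb{R}^3$ be given by $g(t)=\alpha(t)$ on $[0,\ell/4)$, $g(t)=R_1\alpha(\psi_1^\ell(t))$ on $[\ell/4,\ell/2)$, $g(t)=R_2\alpha(\psi_2^\ell(t))$ on $[\ell/2,3\ell/4)$, $g(t)=R_3\alpha(\psi_3^\ell(t))$ on $[3\ell/4,\ell)$. Then $\mathscr{L}(g)=4\mathscr{L}(\alpha)$. Moreover, (the $\ell$-periodic extension of) $g$ is a continuous closed curve, i.e. of class $C^0(\mathbb{R}/\ell\mathbb{Z},\mathbb{R}^3)$, if and only if $\alpha(0)\in\mathbb{R}\mathbf{e}_3$ and $\alpha(\ell/4)\in\mathbb{R}\mathbf{e}_1$. Finally, if $\alpha$ is continuously differentiable, then $g$ is of class $C^1(\mathbb{R}/\ell\mathbb{Z},\mathbb{R}^3)$ if and only if in addition $\alpha'(0)\in\mathrm{span}\{\mathbf{e}_1,\mathbf{e}_2\}$ and $\alpha'(\ell/4)\in\mathrm{span}\{\mathbf{e}_2,\mathbf{e}_3\}$.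
   Context: $\mathbf{e}_1,\mathbf{e}_2,\mathbf{e}_3$ is the standard basis of $\mathbb{R}^3$; $\mathscr{L}$ denotes length. $R_1=\mathrm{diag}(1,-1,-1)$, $R_2=\mathrm{diag}(-1,1,-1)$, $R_3=\mathrm{diag}(-1,-1,1)$. On $\mathbb{R}/\ell\mathbb{Z}$: $\psi_1^\ell(t)=-t+\ell/2$, $\psi_2^\ell(t)=t-\ell/2$, $\psi_3^\ell(t)=-t+\ell$ (mod $\ell$). *)

theory Defs
  imports "HOL-Analysis.Analysis"
begin

definition rmod :: "real \<Rightarrow> real \<Rightarrow> real" where
  "rmod l x = x - l * of_int \<lfloor>x / l\<rfloor>"

definition psi1 :: "real \<Rightarrow> real \<Rightarrow> real" where "psi1 l t = rmod l (- t + l / 2)"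
definition psi2 :: "real \<Rightarrow> real \<Rightarrow> real" where "psi2 l t = rmod l (t - l / 2)"
definition psi3 :: "real \<Rightarrow> real \<Rightarrow> real" where "psi3 l t = rmod l (- t + l)"

definition R1 :: "real^3^3" where
  "R1 = (\<chi> i j. if i = j then (if i = 1 then 1 else -1) else 0)"
definition R2 :: "real^3^3" where
  "R2 = (\<chi> i j. if i = j then (if i = 2 then 1 else -1) else 0)"
definition R3 :: "real^3^3" where
  "R3 = (\<chi> i j. if i = j then (if i = 3 then 1 else -1) else 0)"

definition e1 :: "real^3" where "e1 = axis 1 1"
definition e2 :: "real^3" where "e2 = axis 2 1"
definition e3 :: "real^3" where "e3 = axis 3 1"

definition curve_length :: "(real \<Rightarrow> 'a::real_normed_vector) \<Rightarrow> real set \<Rightarrow> ereal" where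
  "curve_length f I =
     (SUP ts \<in> {ts. sorted ts \<and> set ts \<subseteq> I}.
        ereal (\<Sum>i < length ts - 1. dist (f (ts ! i)) (f (ts ! Suc i))))"

definition per_ext :: "real \<Rightarrow> (real \<Rightarrow> 'a) \<Rightarrow> real \<Rightarrow> 'a" where
  "per_ext l g t = g (rmod l t)"

end

theory Submission
  imports Defs
begin

(* Each R_i is an isometry and the reparametrisations t |-> l/2 - t, t - l/2, l - t are
   monotone, so every quarter of g has the length of alpha; for a continuous curve it does not
   matter whether the parameter interval is closed or half-open.
   Passing from one quarter to the next, g jumps from alpha(l/4) to R1 alpha(l/4), from
   R1 alpha(0) to R2 alpha(0), from R2 alpha(l/4) to R3 alpha(l/4) and from R3 alpha(0) back to
   alpha(0); since R_i fixes exactly the e_i-axis, all four junctions close up iff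
   alpha(0) lies on the e3-axis and alpha(l/4) on the e1-axis.
   The reflected quarters are traversed backwards, so the derivative of g is glued from alpha'
   by the same rule with -R1, R2, -R3 in place of R1, R2, R3, and -R_i fixes exactly the plane
   orthogonal to e_i. Hence g is C^1 iff moreover alpha'(0) is orthogonal to e3 and alpha'(l/4)
   to e1. *)

section \<open>Periodic extension\<close>

lemma rmod_eq_self: "0 \<le> t \<Longrightarrow> t < l \<Longrightarrow> rmod l t = t"
  unfolding rmod_def by (simp add: floor_eq_iff)

lemma rmod_eq_add_period:
  assumes "l > 0" "-l \<le> t" "t < 0"
  shows "rmod l t = t + l"
proof -
  have "\<lfloor>t / l\<rfloor> = -1" using assms by (simp add: floor_eq_iff field_simps)
  then show ?thesis unfolding rmod_def by simp
qed

lemma rmod_self: "rmod l l = 0"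
  unfolding rmod_def by (cases "l = 0") simp_all

lemma rmod_bounds:
  assumes "l > 0"
  shows "0 \<le> rmod l t" "rmod l t < l"
proof -
  have "of_int \<lfloor>t / l\<rfloor> * l \<le> t / l * l" "t / l * l < (of_int \<lfloor>t / l\<rfloor> + 1) * l"
    using assms by (intro mult_right_mono mult_strict_right_mono; simp)+
  then show "0 \<le> rmod l t" "rmod l t < l"
    using assms unfolding rmod_def by (simp_all add: algebra_simps)
qed

lemma rmod_add_int_mult:
  assumes "l > 0"
  shows "rmod l (t + of_int k * l) = rmod l t"
proof -
  have "\<lfloor>(t + of_int k * l) / l\<rfloor> = \<lfloor>t / l\<rfloor> + k"
    using assms by (simp add: add_divide_distrib)
  then show ?thesis unfolding rmod_def by (simp add: algebra_simps)
qed

lemma rmod_eq_translate: "rmod l x = x + of_int (- \<lfloor>x / l\<rfloor>) * l"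
  unfolding rmod_def by simp

lemma per_ext_translate_period:
  "l > 0 \<Longrightarrow> per_ext l h \<circ> (\<lambda>t. t + of_int k * l) = per_ext l h"
  by (auto simp: per_ext_def rmod_add_int_mult)

lemma continuous_on_per_ext:
  assumes l: "l > 0" and S: "{0..<l} \<subseteq> interior S" and cont: "continuous_on S (per_ext l h)"
  shows "continuous_on UNIV (per_ext l h)"
proof (rule continuous_at_imp_continuous_on, intro ballI)
  fix x :: real
  define c where "c = of_int (- \<lfloor>x / l\<rfloor>) * l"
  have "x + c \<in> interior S"
    using rmod_bounds[OF l, of x] S unfolding c_def rmod_eq_translate by auto
  then have "isCont (per_ext l h) (x + c)" by (rule continuous_on_interior[OF cont])
  then have "isCont (per_ext l h \<circ> (\<lambda>t. t + c)) x"
    by (intro continuous_at_compose continuous_intros)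
  then show "isCont (per_ext l h) x"
    unfolding c_def per_ext_translate_period[OF l] .
qed

lemma per_ext_has_vector_derivative:
  assumes l: "l > 0" and S: "{0..<l} \<subseteq> interior S"
    and deriv: "\<forall>t\<in>S. (per_ext l h has_vector_derivative per_ext l h' t) (at t within S)"
  shows "(per_ext l h has_vector_derivative per_ext l h' x) (at x)"
proof -
  define c where "c = of_int (- \<lfloor>x / l\<rfloor>) * l"
  have x_c: "x + c \<in> interior S"
    using rmod_bounds[OF l, of x] S unfolding c_def rmod_eq_translate by auto
  then have "(per_ext l h has_vector_derivative per_ext l h' (x + c)) (at (x + c))"
    using deriv interior_subset at_within_interior[OF x_c] by (metis subsetD)
  moreover have "((\<lambda>t. t + c) has_vector_derivative 1) (at x)"
    by (auto intro!: derivative_eq_intros simp: has_real_derivative_iff_has_vector_derivative[symmetric])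
  ultimately have "((per_ext l h \<circ> (\<lambda>t. t + c)) has_vector_derivative per_ext l h' (x + c)) (at x)"
    using vector_diff_chain_at by fastforce
  then show ?thesis
    using per_ext_translate_period[OF l] unfolding c_def by (metis comp_apply)
qed

section \<open>Coordinate reflections\<close>

lemma sign_flip_mult:
  "(\<chi> i j. if i = j then (if i = k then 1 else -1) else 0) *v (v :: real^'n)
     = (\<chi> i. if i = k then v $ i else - v $ i)"
  by (simp add: vec_eq_iff matrix_vector_mult_def if_distrib[of "\<lambda>x. x * _"] cong: if_cong)

lemma norm_sign_flip: "norm (\<chi> i. if i = k then v $ i else - v $ i) = norm (v :: real^'n)"
  unfolding norm_vec_def by (rule L2_set_cong) auto

lemma R1_mult: "R1 *v v = (\<chi> i. if i = 1 then v $ i else - v $ i)"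
  unfolding R1_def by (rule sign_flip_mult)

lemma R2_mult: "R2 *v v = (\<chi> i. if i = 2 then v $ i else - v $ i)"
  unfolding R2_def by (rule sign_flip_mult)

lemma R3_mult: "R3 *v v = (\<chi> i. if i = 3 then v $ i else - v $ i)"
  unfolding R3_def by (rule sign_flip_mult)

lemma dist_sign_flip_mult:
  assumes "\<And>v :: real^'n. R *v v = (\<chi> i. if i = k then v $ i else - v $ i)"
  shows "dist (R *v x) (R *v y) = dist x y"
proof -
  have "dist (R *v x) (R *v y) = norm (R *v (x - y))"
    by (simp add: dist_norm matrix_vector_mult_diff_distrib)
  then show ?thesis unfolding assms norm_sign_flip by (simp add: dist_norm)
qed

lemma R_mult_components [simp]:
  "(R1 *v v) $ 1 = v $ 1" "(R1 *v v) $ 2 = - v $ 2" "(R1 *v v) $ 3 = - v $ 3"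
  "(R2 *v v) $ 1 = - v $ 1" "(R2 *v v) $ 2 = v $ 2" "(R2 *v v) $ 3 = - v $ 3"
  "(R3 *v v) $ 1 = - v $ 1" "(R3 *v v) $ 2 = - v $ 2" "(R3 *v v) $ 3 = v $ 3"
  by (simp_all add: R1_mult R2_mult R3_mult)

lemma uminus_matrix_vector_mult: "(- M) *v v = - (M *v v :: real^'n)"
  by (simp add: vec_eq_iff matrix_vector_mult_def sum_negf)

lemma matrix_vector_mult_uminus: "M *v (- v) = - (M *v v :: real^'n)"
  by (simp add: vec_eq_iff matrix_vector_mult_def sum_negf)

lemma vec3_eq_iff: "(x::'a^3) = y \<longleftrightarrow> x $ 1 = y $ 1 \<and> x $ 2 = y $ 2 \<and> x $ 3 = y $ 3"
  by (simp add: vec_eq_iff forall_3)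

lemma mem_line_e1_iff: "v \<in> range (\<lambda>c. c *\<^sub>R e1) \<longleftrightarrow> v $ 2 = 0 \<and> v $ 3 = 0"
proof
  assume "v $ 2 = 0 \<and> v $ 3 = 0"
  then have "v = v $ 1 *\<^sub>R e1" by (simp add: vec3_eq_iff e1_def axis_def)
  then show "v \<in> range (\<lambda>c. c *\<^sub>R e1)" by blast
qed (auto simp: e1_def axis_def)

lemma mem_line_e3_iff: "v \<in> range (\<lambda>c. c *\<^sub>R e3) \<longleftrightarrow> v $ 1 = 0 \<and> v $ 2 = 0"
proof
  assume "v $ 1 = 0 \<and> v $ 2 = 0"
  then have "v = v $ 3 *\<^sub>R e3" by (simp add: vec3_eq_iff e3_def axis_def)
  then show "v \<in> range (\<lambda>c. c *\<^sub>R e3)" by blast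
qed (auto simp: e3_def axis_def)

lemma mem_span_e1_e2_iff: "v \<in> span {e1, e2} \<longleftrightarrow> v $ 3 = 0"
proof
  have "span {e1, e2} \<subseteq> {v. v $ 3 = 0}"
    by (rule span_minimal) (auto simp: e1_def e2_def axis_def subspace_def)
  then show "v \<in> span {e1, e2} \<Longrightarrow> v $ 3 = 0" by blast
next
  assume "v $ 3 = 0"
  then have "v = v $ 1 *\<^sub>R e1 + v $ 2 *\<^sub>R e2" by (simp add: vec3_eq_iff e1_def e2_def axis_def)
  also have "\<dots> \<in> span {e1, e2}" by (intro span_add span_mul span_base) auto
  finally show "v \<in> span {e1, e2}" .
qed

lemma mem_span_e2_e3_iff: "v \<in> span {e2, e3} \<longleftrightarrow> v $ 1 = 0"
proof
  have "span {e2, e3} \<subseteq> {v. v $ 1 = 0}"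
    by (rule span_minimal) (auto simp: e2_def e3_def axis_def subspace_def)
  then show "v \<in> span {e2, e3} \<Longrightarrow> v $ 1 = 0" by blast
next
  assume "v $ 1 = 0"
  then have "v = v $ 2 *\<^sub>R e2 + v $ 3 *\<^sub>R e3" by (simp add: vec3_eq_iff e2_def e3_def axis_def)
  also have "\<dots> \<in> span {e2, e3}" by (intro span_add span_mul span_base) auto
  finally show "v \<in> span {e2, e3}" .
qed

section \<open>Length of a curve\<close>

definition inscribed_length :: "(real \<Rightarrow> 'a::real_normed_vector) \<Rightarrow> real list \<Rightarrow> real" where
  "inscribed_length f ts = (\<Sum>i < length ts - 1. dist (f (ts ! i)) (f (ts ! Suc i)))"

lemma curve_length_inscribed:
  "curve_length f I = (SUP ts \<in> {ts. sorted ts \<and> set ts \<subseteq> I}. ereal (inscribed_length f ts))"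
  unfolding curve_length_def inscribed_length_def ..

lemma inscribed_length_map: "inscribed_length f (map h ts) = inscribed_length (f \<circ> h) ts"
  unfolding inscribed_length_def by (intro sum.cong) auto

lemma inscribed_length_rev: "inscribed_length f (rev ts) = inscribed_length f ts"
proof -
  let ?n = "length ts"
  have "inscribed_length f (rev ts)
      = (\<Sum>i < ?n - 1. dist (f (ts ! (?n - Suc i))) (f (ts ! (?n - Suc (Suc i)))))"
    unfolding inscribed_length_def by (intro sum.cong) (auto simp: rev_nth)
  also have "\<dots> = (\<Sum>j < ?n - 1. dist (f (ts ! Suc j)) (f (ts ! j)))"
    by (rule sum.reindex_bij_witness[of _ "\<lambda>j. ?n - 2 - j" "\<lambda>i. ?n - 2 - i"])
       (auto simp: Suc_diff_Suc numeral_2_eq_2)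
  also have "\<dots> = inscribed_length f ts"
    unfolding inscribed_length_def by (simp add: dist_commute)
  finally show ?thesis .
qed

lemma curve_length_cong: "(\<And>t. t \<in> I \<Longrightarrow> f t = h t) \<Longrightarrow> curve_length f I = curve_length h I"
  unfolding curve_length_def
  by (intro SUP_cong refl arg_cong[where f = ereal] sum.cong) (auto simp: subset_iff)

lemma curve_length_isometry:
  assumes "\<And>x y. dist (R x) (R y) = dist x y"
  shows "curve_length (\<lambda>t. R (f t)) I = curve_length f I"
  unfolding curve_length_def assms ..

lemma curve_length_reflect: "curve_length (\<lambda>t. f (c - t)) I = curve_length f ((-) c ` I)"
proof -
  have eq: "{ts. sorted ts \<and> set ts \<subseteq> (-) c ` I} = (\<lambda>ts. rev (map ((-) c) ts)) ` {ts. sorted ts \<and> set ts \<subseteq> I}"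
  proof (intro equalityI subsetI)
    fix ts assume "ts \<in> {ts. sorted ts \<and> set ts \<subseteq> (-) c ` I}"
    then show "ts \<in> (\<lambda>ts. rev (map ((-) c) ts)) ` {ts. sorted ts \<and> set ts \<subseteq> I}"
      by (intro image_eqI[where x = "rev (map ((-) c) ts)"])
         (auto simp: rev_map comp_def sorted_wrt_rev sorted_wrt_map)
  qed (auto simp: sorted_wrt_rev sorted_wrt_map subset_iff)
  show ?thesis
    unfolding curve_length_inscribed eq image_image inscribed_length_rev inscribed_length_map
    by (simp add: comp_def)
qed

lemma curve_length_translate: "curve_length (\<lambda>t. f (t - c)) I = curve_length f ((\<lambda>t. t - c) ` I)"
proof -
  have eq: "{ts. sorted ts \<and> set ts \<subseteq> (\<lambda>t. t - c) ` I} = map (\<lambda>t. t - c) ` {ts. sorted ts \<and> set ts \<subseteq> I}"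
  proof (intro equalityI subsetI)
    fix ts assume "ts \<in> {ts. sorted ts \<and> set ts \<subseteq> (\<lambda>t. t - c) ` I}"
    then show "ts \<in> map (\<lambda>t. t - c) ` {ts. sorted ts \<and> set ts \<subseteq> I}"
      by (intro image_eqI[where x = "map (\<lambda>t. t + c) ts"]) (auto simp: comp_def sorted_map)
  qed (auto simp: sorted_map subset_iff)
  show ?thesis
    unfolding curve_length_inscribed eq image_image inscribed_length_map by (simp add: comp_def)
qed

(* Each inscribed polygon with vertices in T is the limit, as d tends to 0, of the polygon
   with vertices \<phi> d t in S. *)
lemma curve_length_eq_by_monotone_approx:
  fixes \<phi> :: "real \<Rightarrow> real \<Rightarrow> real"
  assumes cont: "continuous_on T f" and "S \<subseteq> T"
    and into_S: "\<And>d t. 0 < d \<Longrightarrow> d < 1 \<Longrightarrow> t \<in> T \<Longrightarrow> \<phi> d t \<in> S"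
    and mono: "\<And>d s t. 0 < d \<Longrightarrow> d < 1 \<Longrightarrow> s \<le> t \<Longrightarrow> \<phi> d s \<le> \<phi> d t"
    and lim: "\<And>t. t \<in> T \<Longrightarrow> ((\<lambda>d. \<phi> d t) \<longlongrightarrow> t) (at_right 0)"
  shows "curve_length f S = curve_length f T"
proof (rule antisym)
  show "curve_length f S \<le> curve_length f T"
    unfolding curve_length_def by (rule SUP_subset_mono) (use \<open>S \<subseteq> T\<close> in auto)
next
  show "curve_length f T \<le> curve_length f S"
    unfolding curve_length_inscribed[of f T]
  proof (rule SUP_least)
    fix ts assume "ts \<in> {ts. sorted ts \<and> set ts \<subseteq> T}"
    then have ts: "sorted ts" "set ts \<subseteq> T" by auto
    have small: "\<forall>\<^sub>F d in at_right 0. d \<in> {0<..<1::real}"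
      by (rule eventually_at_right_real) simp
    have "\<forall>\<^sub>F d in at_right 0. ereal (inscribed_length (f \<circ> \<phi> d) ts) \<le> curve_length f S"
      using small
    proof eventually_elim
      case (elim d)
      have "sorted (map (\<phi> d) ts)"
        using ts(1) elim by (auto simp: sorted_map elim: sorted_wrt_mono_rel[rotated] intro: mono)
      moreover have "set (map (\<phi> d) ts) \<subseteq> S" using ts(2) elim into_S by auto
      ultimately show ?case
        unfolding curve_length_inscribed inscribed_length_map[symmetric] by (intro SUP_upper) auto
    qed
    moreover have "((\<lambda>d. ereal (inscribed_length (f \<circ> \<phi> d) ts)) \<longlongrightarrow> ereal (inscribed_length f ts)) (at_right 0)"
      unfolding inscribed_length_def comp_def
    proof (intro tendsto_intros)
      have "((\<lambda>d. f (\<phi> d t)) \<longlongrightarrow> f t) (at_right 0)" if "t \<in> T" for t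
      proof -
        have "\<forall>\<^sub>F d in at_right 0. \<phi> d t \<in> T"
          using small by eventually_elim (use into_S \<open>S \<subseteq> T\<close> that in auto)
        then show ?thesis by (rule continuous_on_tendsto_compose[OF cont lim[OF that] that])
      qed
      then show "((\<lambda>d. f (\<phi> d (ts ! i))) \<longlongrightarrow> f (ts ! i)) (at_right 0)"
        and "((\<lambda>d. f (\<phi> d (ts ! Suc i))) \<longlongrightarrow> f (ts ! Suc i)) (at_right 0)"
        if "i \<in> {..<length ts - 1}" for i
        using that ts(2) by (auto simp: subset_iff)
    qed
    ultimately show "ereal (inscribed_length f ts) \<le> curve_length f S"
      by (intro tendsto_le[OF trivial_limit_at_right_real tendsto_const])
  qed
qed

lemma curve_length_atLeastLessThan:
  assumes "a < b" "continuous_on {a..b} f"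
  shows "curve_length f {a..<b} = curve_length f {a..b}"
proof (rule curve_length_eq_by_monotone_approx[where \<phi> = "\<lambda>d t. (1 - d) * t + d * a"])
  fix d t :: real assume "0 < d" "d < 1" "t \<in> {a..b}"
  moreover from this have "(1 - d) * a \<le> (1 - d) * t" "(1 - d) * t \<le> (1 - d) * b" "d * a < d * b"
    using \<open>a < b\<close> by (intro mult_left_mono mult_strict_left_mono; simp)+
  ultimately show "(1 - d) * t + d * a \<in> {a..<b}"
    unfolding atLeastLessThan_iff atLeastAtMost_iff by (simp only: algebra_simps) linarith
next
  show "((\<lambda>d. (1 - d) * t + d * a) \<longlongrightarrow> t) (at_right 0)" for t :: real
    by (auto intro!: tendsto_eq_intros)
qed (use assms in \<open>auto intro: mult_left_mono\<close>)

lemma curve_length_greaterThanAtMost: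
  assumes "a < b" "continuous_on {a..b} f"
  shows "curve_length f {a<..b} = curve_length f {a..b}"
proof (rule curve_length_eq_by_monotone_approx[where \<phi> = "\<lambda>d t. (1 - d) * t + d * b"])
  fix d t :: real assume "0 < d" "d < 1" "t \<in> {a..b}"
  moreover from this have "(1 - d) * a \<le> (1 - d) * t" "(1 - d) * t \<le> (1 - d) * b" "d * a < d * b"
    using \<open>a < b\<close> by (intro mult_left_mono mult_strict_left_mono; simp)+
  ultimately show "(1 - d) * t + d * b \<in> {a<..b}"
    unfolding greaterThanAtMost_iff atLeastAtMost_iff by (simp only: algebra_simps) linarith
next
  show "((\<lambda>d. (1 - d) * t + d * b) \<longlongrightarrow> t) (at_right 0)" for t :: real
    by (auto intro!: tendsto_eq_intros)
qed (use assms in \<open>auto intro: mult_left_mono\<close>)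

section \<open>Curves glued from four pieces\<close>

lemma has_vector_derivative_closed_Un:
  assumes "closed S" "closed T"
    and "\<forall>x\<in>S. (f has_vector_derivative f' x) (at x within S)"
    and "\<forall>x\<in>T. (f has_vector_derivative f' x) (at x within T)"
  shows "\<forall>x\<in>S \<union> T. (f has_vector_derivative f' x) (at x within S \<union> T)"
proof
  have outside: "(f has_vector_derivative f' x) (at x within U)" if "closed U" "x \<notin> U" for x U
  proof -
    have "at x within U = bot"
      using that closed_limpt trivial_limit_within by blast
    then show ?thesis
      by (simp add: has_vector_derivative_def has_derivative_def bounded_linear_scaleR_left)
  qed
  fix x assume "x \<in> S \<union> T"
  then have "(f has_vector_derivative f' x) (at x within S)" "(f has_vector_derivative f' x) (at x within T)"
    using assms outside by blast+
  then show "(f has_vector_derivative f' x) (at x within S \<union> T)"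
    unfolding has_vector_derivative_def has_derivative_within Lim_within_Un by blast
qed

lemma has_vector_derivative_matrix_comp:
  fixes \<beta> :: "real \<Rightarrow> real^'n"
  assumes "\<forall>u\<in>B. (\<beta> has_vector_derivative \<beta>' u) (at u within B)"
    and "\<forall>t\<in>I. F t = M *v \<beta> (\<phi> t)" and "\<forall>t\<in>I. F' t = M *v (s *\<^sub>R \<beta>' (\<phi> t))"
    and "\<forall>t\<in>I. (\<phi> has_real_derivative s) (at t within I)" and "\<phi> ` I \<subseteq> B"
  shows "\<forall>t\<in>I. (F has_vector_derivative F' t) (at t within I)"
proof
  fix t assume t: "t \<in> I"
  then have "(\<beta> has_vector_derivative \<beta>' (\<phi> t)) (at (\<phi> t) within \<phi> ` I)"
    using assms(1,5) by (blast intro: has_vector_derivative_within_subset)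
  with t assms(4) have "((\<lambda>t. \<beta> (\<phi> t)) has_vector_derivative s *\<^sub>R \<beta>' (\<phi> t)) (at t within I)"
    using vector_diff_chain_within[of \<phi> s t I \<beta>]
    by (simp add: comp_def has_real_derivative_iff_has_vector_derivative)
  then have "((\<lambda>t. M *v \<beta> (\<phi> t)) has_vector_derivative M *v (s *\<^sub>R \<beta>' (\<phi> t))) (at t within I)"
    by (rule bounded_linear.has_vector_derivative[OF matrix_vector_mul_bounded_linear])
  then show "(F has_vector_derivative F' t) (at t within I)"
    using t assms(2,3) by (auto intro: has_vector_derivative_transform)
qed

lemma isCont_eq_left_limit:
  fixes f \<phi> :: "real \<Rightarrow> 'a::t2_space"
  assumes "isCont f x" "a < x" "continuous_on {a..x} \<phi>" "\<And>t. t \<in> {a..<x} \<Longrightarrow> f t = \<phi> t"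
  shows "f x = \<phi> x"
proof -
  have "(\<phi> \<longlongrightarrow> \<phi> x) (at_left x)"
    using assms(2,3) by (metis at_within_Icc_at_left atLeastAtMost_iff continuous_on_def order.refl
        order.strict_implies_order)
  moreover have "\<forall>\<^sub>F t in at_left x. f t = \<phi> t"
    using eventually_at_left_real[OF \<open>a < x\<close>] by eventually_elim (auto intro: assms(4))
  ultimately have "(f \<longlongrightarrow> \<phi> x) (at_left x)"
    by (simp add: tendsto_cong)
  moreover have "(f \<longlongrightarrow> f x) (at_left x)"
    using assms(1) unfolding isCont_def by (rule tendsto_within_subset) simp
  ultimately show ?thesis
    using tendsto_unique[OF trivial_limit_at_left_real] by blast
qed

lemma vector_derivative_at_eq_within_Icc:
  assumes "(f has_vector_derivative D) (at x)" "(f has_vector_derivative E) (at x within {a..b})"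
    "a < b" "x \<in> {a..b}"
  shows "D = E"
  using vector_derivative_unique_within_closed_interval[of a b x f D E] assms
  by (simp add: has_vector_derivative_at_within)

locale four_piece_curve =
  fixes l :: real and \<beta> h :: "real \<Rightarrow> real^3" and M1 M2 M3 :: "real^3^3"
  assumes l_pos: "l > 0"
    and quarter1: "\<And>t. t \<in> {0..<l/4} \<Longrightarrow> h t = \<beta> t"
    and quarter2: "\<And>t. t \<in> {l/4..<l/2} \<Longrightarrow> h t = M1 *v \<beta> (l/2 - t)"
    and quarter3: "\<And>t. t \<in> {l/2..<3*l/4} \<Longrightarrow> h t = M2 *v \<beta> (t - l/2)"
    and quarter4: "\<And>t. t \<in> {3*l/4..<l} \<Longrightarrow> h t = M3 *v \<beta> (l - t)"

(* Used both for g, with R1, R2, R3, and for its derivative, with -R1, R2, -R3. *)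
locale four_piece_loop = four_piece_curve +
  assumes junction1: "\<beta> (l/4) = M1 *v \<beta> (l/4)"
    and junction2: "M1 *v \<beta> 0 = M2 *v \<beta> 0"
    and junction3: "M2 *v \<beta> (l/4) = M3 *v \<beta> (l/4)"
    and junction0: "M3 *v \<beta> 0 = \<beta> 0"
begin

lemma per_ext_before_0: "t \<in> {-l/4..0} \<Longrightarrow> per_ext l h t = M3 *v \<beta> (-t)"
  using l_pos quarter1[of 0] quarter4[of "t + l"] junction0
  by (cases "t = 0") (auto simp: per_ext_def rmod_eq_self rmod_eq_add_period)

lemma per_ext_quarter1: "t \<in> {0..l/4} \<Longrightarrow> per_ext l h t = \<beta> t"
  using l_pos quarter1[of t] quarter2[of "l/4"] junction1
  by (cases "t = l/4") (auto simp: per_ext_def rmod_eq_self)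

lemma per_ext_quarter2: "t \<in> {l/4..l/2} \<Longrightarrow> per_ext l h t = M1 *v \<beta> (l/2 - t)"
  using l_pos quarter2[of t] quarter3[of "l/2"] junction2
  by (cases "t = l/2") (auto simp: per_ext_def rmod_eq_self)

lemma per_ext_quarter3:
  assumes "t \<in> {l/2..3*l/4}"
  shows "per_ext l h t = M2 *v \<beta> (t - l/2)"
proof (cases "t = 3*l/4")
  case True
  then have t: "l - t = l/4" "t - l/2 = l/4" by simp_all
  have "per_ext l h t = M3 *v \<beta> (l - t)"
    using True l_pos quarter4[of t] by (simp add: per_ext_def rmod_eq_self)
  also have "\<dots> = M2 *v \<beta> (t - l/2)" unfolding t by (rule junction3[symmetric])
  finally show ?thesis .
qed (use assms l_pos quarter3[of t] in \<open>auto simp: per_ext_def rmod_eq_self\<close>)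

lemma per_ext_quarter4: "t \<in> {3*l/4..l} \<Longrightarrow> per_ext l h t = M3 *v \<beta> (l - t)"
  using l_pos quarter1[of 0] quarter4[of t] junction0
  by (cases "t = l") (auto simp: per_ext_def rmod_eq_self rmod_self)

lemma extended_domain_eq:
  "{-l/4..l} = {-l/4..0} \<union> {0..l/4} \<union> {l/4..l/2} \<union> {l/2..3*l/4} \<union> {3*l/4..l}"
  and period_in_interior: "{0..<l} \<subseteq> interior {-l/4..l}"
  using l_pos by auto

lemma continuous_on_per_ext_loop:
  assumes cont: "continuous_on {0..l/4} \<beta>"
  shows "continuous_on UNIV (per_ext l h)"
proof (rule continuous_on_per_ext[OF l_pos period_in_interior])
  have piece: "continuous_on I (per_ext l h)"
    if "continuous_on I \<phi>" "\<phi> ` I \<subseteq> {0..l/4}" "\<And>t. t \<in> I \<Longrightarrow> per_ext l h t = M *v \<beta> (\<phi> t)"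
    for I \<phi> and M :: "real^3^3"
  proof (rule continuous_on_eq[OF _ that(3)[symmetric]])
    show "continuous_on I (\<lambda>t. M *v \<beta> (\<phi> t))"
      by (intro continuous_on_compose2[OF matrix_vector_mult_linear_continuous_on]
          continuous_on_compose2[OF cont that(1,2)]) auto
  qed
  have "continuous_on {-l/4..0} (per_ext l h)"
    by (rule piece[OF _ _ per_ext_before_0]) (auto intro!: continuous_intros)
  moreover have "continuous_on {0..l/4} (per_ext l h)"
    by (rule continuous_on_eq[OF cont per_ext_quarter1[symmetric]])
  moreover have "continuous_on {l/4..l/2} (per_ext l h)"
    by (rule piece[OF _ _ per_ext_quarter2]) (auto intro!: continuous_intros)
  moreover have "continuous_on {l/2..3*l/4} (per_ext l h)"
    by (rule piece[OF _ _ per_ext_quarter3]) (auto intro!: continuous_intros)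
  moreover have "continuous_on {3*l/4..l} (per_ext l h)"
    by (rule piece[OF _ _ per_ext_quarter4]) (auto intro!: continuous_intros)
  ultimately show "continuous_on {-l/4..l} (per_ext l h)"
    unfolding extended_domain_eq by (intro continuous_on_closed_Un closed_Un closed_atLeastAtMost)
qed

end

lemma per_ext_loop_has_vector_derivative:
  assumes h: "four_piece_loop l \<beta> h M1 M2 M3" and h': "four_piece_loop l \<beta>' h' (-M1) M2 (-M3)"
    and deriv: "\<forall>u\<in>{0..l/4}. (\<beta> has_vector_derivative \<beta>' u) (at u within {0..l/4})"
  shows "(per_ext l h has_vector_derivative per_ext l h' x) (at x)"
proof (rule per_ext_has_vector_derivative)
  interpret h: four_piece_loop l \<beta> h M1 M2 M3 by (rule h)
  interpret h': four_piece_loop l \<beta>' h' "-M1" M2 "-M3" by (rule h')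
  show "l > 0" "{0..<l} \<subseteq> interior {-l/4..l}" by (fact h.l_pos h.period_in_interior)+
  let ?D = "\<lambda>I. \<forall>t\<in>I. (per_ext l h has_vector_derivative per_ext l h' t) (at t within I)"
  have "?D {-l/4..0}"
    by (rule has_vector_derivative_matrix_comp[OF deriv, where s = "-1" and \<phi> = "\<lambda>t. -t"])
       (auto simp: h.per_ext_before_0 h'.per_ext_before_0 uminus_matrix_vector_mult
        matrix_vector_mult_uminus intro!: derivative_eq_intros)
  moreover have "?D {0..l/4}"
    using deriv
    by (auto simp: h.per_ext_quarter1 h'.per_ext_quarter1 intro: has_vector_derivative_transform)
  moreover have "?D {l/4..l/2}"
    by (rule has_vector_derivative_matrix_comp[OF deriv, where s = "-1" and \<phi> = "\<lambda>t. l/2 - t"])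
       (auto simp: h.per_ext_quarter2 h'.per_ext_quarter2 uminus_matrix_vector_mult
        matrix_vector_mult_uminus intro!: derivative_eq_intros)
  moreover have "?D {l/2..3*l/4}"
    by (rule has_vector_derivative_matrix_comp[OF deriv, where s = 1 and \<phi> = "\<lambda>t. t - l/2"])
       (auto simp: h.per_ext_quarter3 h'.per_ext_quarter3 intro!: derivative_eq_intros)
  moreover have "?D {3*l/4..l}"
    by (rule has_vector_derivative_matrix_comp[OF deriv, where s = "-1" and \<phi> = "\<lambda>t. l - t"])
       (auto simp: h.per_ext_quarter4 h'.per_ext_quarter4 uminus_matrix_vector_mult
        matrix_vector_mult_uminus intro!: derivative_eq_intros)
  ultimately show "?D {-l/4..l}"
    unfolding h.extended_domain_eq
    by (intro has_vector_derivative_closed_Un closed_Un closed_atLeastAtMost)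
qed

section \<open>The reflected curve\<close>

locale reflected_quarters = four_piece_curve l \<alpha> g R1 R2 R3
  for l :: real and \<alpha> g :: "real \<Rightarrow> real^3" +
  assumes \<alpha>_cont: "continuous_on {0..l/4} \<alpha>"
begin

lemma curve_length_quarters:
  "curve_length g {0..<l/4} = curve_length \<alpha> {0..l/4}"
  "curve_length g {l/4..<l/2} = curve_length \<alpha> {0..l/4}"
  "curve_length g {l/2..<3*l/4} = curve_length \<alpha> {0..l/4}"
  "curve_length g {3*l/4..<l} = curve_length \<alpha> {0..l/4}"
proof -
  have l4: "0 < l/4" using l_pos by simp
  have "curve_length g {0..<l/4} = curve_length \<alpha> {0..<l/4}"
    by (rule curve_length_cong) (rule quarter1)
  also have "\<dots> = curve_length \<alpha> {0..l/4}" by (rule curve_length_atLeastLessThan[OF l4 \<alpha>_cont])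
  finally show "curve_length g {0..<l/4} = curve_length \<alpha> {0..l/4}" .
  have "curve_length g {l/4..<l/2} = curve_length (\<lambda>t. R1 *v \<alpha> (l/2 - t)) {l/4..<l/2}"
    by (rule curve_length_cong) (rule quarter2)
  also have "\<dots> = curve_length (\<lambda>t. \<alpha> (l/2 - t)) {l/4..<l/2}"
    by (rule curve_length_isometry) (rule dist_sign_flip_mult[OF R1_mult])
  also have "\<dots> = curve_length \<alpha> {0<..l/4}" by (simp add: curve_length_reflect)
  also have "\<dots> = curve_length \<alpha> {0..l/4}" by (rule curve_length_greaterThanAtMost[OF l4 \<alpha>_cont])
  finally show "curve_length g {l/4..<l/2} = curve_length \<alpha> {0..l/4}" .
  have "curve_length g {l/2..<3*l/4} = curve_length (\<lambda>t. R2 *v \<alpha> (t - l/2)) {l/2..<3*l/4}"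
    by (rule curve_length_cong) (rule quarter3)
  also have "\<dots> = curve_length (\<lambda>t. \<alpha> (t - l/2)) {l/2..<3*l/4}"
    by (rule curve_length_isometry) (rule dist_sign_flip_mult[OF R2_mult])
  also have "\<dots> = curve_length \<alpha> {0..<l/4}"
    using image_add_atLeastLessThan'[of "-(l/2)" "l/2" "3*l/4"] by (simp add: curve_length_translate)
  also have "\<dots> = curve_length \<alpha> {0..l/4}" by (rule curve_length_atLeastLessThan[OF l4 \<alpha>_cont])
  finally show "curve_length g {l/2..<3*l/4} = curve_length \<alpha> {0..l/4}" .
  have "curve_length g {3*l/4..<l} = curve_length (\<lambda>t. R3 *v \<alpha> (l - t)) {3*l/4..<l}"
    by (rule curve_length_cong) (rule quarter4)
  also have "\<dots> = curve_length (\<lambda>t. \<alpha> (l - t)) {3*l/4..<l}"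
    by (rule curve_length_isometry) (rule dist_sign_flip_mult[OF R3_mult])
  also have "\<dots> = curve_length \<alpha> {0<..l/4}" by (simp add: curve_length_reflect)
  also have "\<dots> = curve_length \<alpha> {0..l/4}" by (rule curve_length_greaterThanAtMost[OF l4 \<alpha>_cont])
  finally show "curve_length g {3*l/4..<l} = curve_length \<alpha> {0..l/4}" .
qed

lemma four_piece_loop_if_ends_on_axes:
  assumes "\<alpha> 0 \<in> range (\<lambda>c. c *\<^sub>R e3)" "\<alpha> (l/4) \<in> range (\<lambda>c. c *\<^sub>R e1)"
  shows "four_piece_loop l \<alpha> g R1 R2 R3"
  using assms by unfold_locales (auto simp: mem_line_e1_iff mem_line_e3_iff vec3_eq_iff)

lemma ends_on_axes_if_continuous:
  assumes cont: "continuous_on UNIV (per_ext l g)"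
  shows "\<alpha> 0 \<in> range (\<lambda>c. c *\<^sub>R e3) \<and> \<alpha> (l/4) \<in> range (\<lambda>c. c *\<^sub>R e1)"
proof -
  have "per_ext l g (l/4) = \<alpha> (l/4)"
  proof (rule isCont_eq_left_limit[where a = 0, OF _ _ \<alpha>_cont])
    show "per_ext l g t = \<alpha> t" if "t \<in> {0..<l/4}" for t
      using that l_pos quarter1[of t] by (simp add: per_ext_def rmod_eq_self)
  qed (use cont l_pos in \<open>auto intro: continuous_on_interior\<close>)
  moreover have "per_ext l g (l/4) = R1 *v \<alpha> (l/4)"
    using l_pos quarter2[of "l/4"] by (simp add: per_ext_def rmod_eq_self)
  moreover have "per_ext l g 0 = R3 *v \<alpha> (-0)"
  proof (rule isCont_eq_left_limit[where a = "-l/4" and \<phi> = "\<lambda>t. R3 *v \<alpha> (-t)"])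
    show "continuous_on {-l/4..0} (\<lambda>t. R3 *v \<alpha> (-t))"
      by (intro continuous_on_compose2[OF matrix_vector_mult_linear_continuous_on]
          continuous_on_compose2[OF \<alpha>_cont] continuous_intros) auto
    show "per_ext l g t = R3 *v \<alpha> (-t)" if "t \<in> {-l/4..<0}" for t
      using that l_pos quarter4[of "t + l"] by (simp add: per_ext_def rmod_eq_add_period)
  qed (use cont l_pos in \<open>auto intro: continuous_on_interior\<close>)
  moreover have "per_ext l g 0 = \<alpha> 0"
    using l_pos quarter1[of 0] by (simp add: per_ext_def rmod_eq_self)
  ultimately have "\<alpha> (l/4) = R1 *v \<alpha> (l/4)" "R3 *v \<alpha> 0 = \<alpha> 0" by simp_all
  then show ?thesis
    unfolding mem_line_e1_iff mem_line_e3_iff vec3_eq_iff by simp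
qed

lemma continuous_iff_ends_on_axes:
  "continuous_on UNIV (per_ext l g) \<longleftrightarrow>
     \<alpha> 0 \<in> range (\<lambda>c. c *\<^sub>R e3) \<and> \<alpha> (l/4) \<in> range (\<lambda>c. c *\<^sub>R e1)"
  using ends_on_axes_if_continuous four_piece_loop.continuous_on_per_ext_loop[OF _ \<alpha>_cont]
    four_piece_loop_if_ends_on_axes by blast

lemma tangents_if_C1:
  assumes deriv: "\<forall>t\<in>{0..l/4}. (\<alpha> has_vector_derivative \<alpha>' t) (at t within {0..l/4})"
    and C1: "per_ext l g C1_differentiable_on UNIV"
  shows "\<alpha>' 0 \<in> span {e1, e2} \<and> \<alpha>' (l/4) \<in> span {e2, e3}"
proof -
  obtain D where D: "\<And>x. (per_ext l g has_vector_derivative D x) (at x)"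
    using C1 unfolding C1_differentiable_on_def by blast
  interpret four_piece_loop l \<alpha> g R1 R2 R3
    using four_piece_loop_if_ends_on_axes ends_on_axes_if_continuous
      C1_differentiable_imp_continuous_on[OF C1] by blast
  have l4: "0 < l/4" "-l/4 < 0" "l/4 < l/2" using l_pos by simp_all
  have quarter1_side: "\<forall>t\<in>{0..l/4}. (per_ext l g has_vector_derivative \<alpha>' t) (at t within {0..l/4})"
    using deriv by (auto simp: per_ext_quarter1 intro: has_vector_derivative_transform)
  have quarter2_side: "(per_ext l g has_vector_derivative R1 *v ((-1) *\<^sub>R \<alpha>' (l/2 - l/4)))
      (at (l/4) within {l/4..l/2})"
    by (rule has_vector_derivative_matrix_comp[OF deriv, THEN bspec])
       (use l4 in \<open>auto simp: per_ext_quarter2 intro!: derivative_eq_intros\<close>)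
  have before_0_side: "(per_ext l g has_vector_derivative R3 *v ((-1) *\<^sub>R \<alpha>' (-0)))
      (at 0 within {-l/4..0})"
    by (rule has_vector_derivative_matrix_comp[OF deriv, THEN bspec])
       (use l4 in \<open>auto simp: per_ext_before_0 intro!: derivative_eq_intros\<close>)
  have "D 0 = \<alpha>' 0" "D (l/4) = \<alpha>' (l/4)"
    using quarter1_side l4
    by (auto intro!: vector_derivative_at_eq_within_Icc[OF D, where a = 0 and b = "l/4"])
  moreover have "D (l/4) = R1 *v ((-1) *\<^sub>R \<alpha>' (l/2 - l/4))"
    using vector_derivative_at_eq_within_Icc[OF D quarter2_side] l4 by auto
  moreover have "D 0 = R3 *v ((-1) *\<^sub>R \<alpha>' (-0))"
    using vector_derivative_at_eq_within_Icc[OF D before_0_side] l4 by auto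
  moreover have "l/2 - l/4 = l/4" by simp
  ultimately have "\<alpha>' (l/4) = R1 *v (- \<alpha>' (l/4))" "\<alpha>' 0 = R3 *v (- \<alpha>' 0)" by simp_all
  then show ?thesis
    unfolding mem_span_e1_e2_iff mem_span_e2_e3_iff vec3_eq_iff by simp
qed

lemma C1_if_tangents:
  assumes deriv: "\<forall>t\<in>{0..l/4}. (\<alpha> has_vector_derivative \<alpha>' t) (at t within {0..l/4})"
    and \<alpha>'_cont: "continuous_on {0..l/4} \<alpha>'"
    and ends: "\<alpha> 0 \<in> range (\<lambda>c. c *\<^sub>R e3)" "\<alpha> (l/4) \<in> range (\<lambda>c. c *\<^sub>R e1)"
    and tangents: "\<alpha>' 0 \<in> span {e1, e2}" "\<alpha>' (l/4) \<in> span {e2, e3}"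
  shows "per_ext l g C1_differentiable_on UNIV"
proof -
  define g' where "g' t = (if t < l/4 then \<alpha>' t else if t < l/2 then (-R1) *v \<alpha>' (l/2 - t)
    else if t < 3*l/4 then R2 *v \<alpha>' (t - l/2) else (-R3) *v \<alpha>' (l - t))" for t
  have "four_piece_loop l \<alpha>' g' (-R1) R2 (-R3)"
    using l_pos tangents
    by unfold_locales
      (auto simp: g'_def mem_span_e1_e2_iff mem_span_e2_e3_iff vec3_eq_iff uminus_matrix_vector_mult)
  then have "(per_ext l g has_vector_derivative per_ext l g' x) (at x)"
    and "continuous_on UNIV (per_ext l g')" for x
    using per_ext_loop_has_vector_derivative[OF four_piece_loop_if_ends_on_axes[OF ends] _ deriv]
      four_piece_loop.continuous_on_per_ext_loop[OF _ \<alpha>'_cont] by blast+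
  then show ?thesis
    unfolding C1_differentiable_on_def by blast
qed

lemma C1_iff_ends_and_tangents:
  assumes "\<forall>t\<in>{0..l/4}. (\<alpha> has_vector_derivative \<alpha>' t) (at t within {0..l/4})"
    and "continuous_on {0..l/4} \<alpha>'"
  shows "per_ext l g C1_differentiable_on UNIV \<longleftrightarrow>
    \<alpha> 0 \<in> range (\<lambda>c. c *\<^sub>R e3) \<and> \<alpha> (l/4) \<in> range (\<lambda>c. c *\<^sub>R e1)
    \<and> \<alpha>' 0 \<in> span {e1, e2} \<and> \<alpha>' (l/4) \<in> span {e2, e3}"
  using assms tangents_if_C1 C1_if_tangents ends_on_axes_if_continuous
    C1_differentiable_imp_continuous_on by blast

end

theorem lemma3p5:
  fixes l :: real and \<alpha> g :: "real \<Rightarrow> real^3"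
  assumes l_pos: "l > 0"
    and \<alpha>_cont: "continuous_on {0..l/4} \<alpha>"
    and len_pos: "0 < curve_length \<alpha> {0..l/4}"
    and len_fin: "curve_length \<alpha> {0..l/4} < \<infinity>"
    and g1: "\<And>t. t \<in> {0..<l/4} \<Longrightarrow> g t = \<alpha> t"
    and g2: "\<And>t. t \<in> {l/4..<l/2} \<Longrightarrow> g t = R1 *v \<alpha> (psi1 l t)"
    and g3: "\<And>t. t \<in> {l/2..<3*l/4} \<Longrightarrow> g t = R2 *v \<alpha> (psi2 l t)"
    and g4: "\<And>t. t \<in> {3*l/4..<l} \<Longrightarrow> g t = R3 *v \<alpha> (psi3 l t)"
  shows "(curve_length g {0..<l/4} + curve_length g {l/4..<l/2}
           + curve_length g {l/2..<3*l/4} + curve_length g {3*l/4..<l}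
         = 4 * curve_length \<alpha> {0..l/4})
    \<and> (continuous_on UNIV (per_ext l g) \<longleftrightarrow>
           (\<alpha> 0 \<in> range (\<lambda>c. c *\<^sub>R e3) \<and> \<alpha> (l/4) \<in> range (\<lambda>c. c *\<^sub>R e1)))
    \<and> (\<forall>\<alpha>'. (\<forall>t\<in>{0..l/4}. (\<alpha> has_vector_derivative \<alpha>' t) (at t within {0..l/4}))
            \<and> continuous_on {0..l/4} \<alpha>'
            \<longrightarrow> (per_ext l g C1_differentiable_on UNIV \<longleftrightarrow>
                 (\<alpha> 0 \<in> range (\<lambda>c. c *\<^sub>R e3) \<and> \<alpha> (l/4) \<in> range (\<lambda>c. c *\<^sub>R e1)
                  \<and> \<alpha>' 0 \<in> span {e1, e2} \<and> \<alpha>' (l/4) \<in> span {e2, e3})))"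
proof -
  interpret reflected_quarters l \<alpha> g
  proof
    show "g t = R1 *v \<alpha> (l/2 - t)" if "t \<in> {l/4..<l/2}" for t
      using g2[OF that] that by (simp add: psi1_def rmod_eq_self)
    show "g t = R2 *v \<alpha> (t - l/2)" if "t \<in> {l/2..<3*l/4}" for t
      using g3[OF that] that by (simp add: psi2_def rmod_eq_self)
    show "g t = R3 *v \<alpha> (l - t)" if "t \<in> {3*l/4..<l}" for t
      using g4[OF that] that by (simp add: psi3_def rmod_eq_self)
  qed (fact l_pos \<alpha>_cont g1)+
  have "curve_length g {0..<l/4} + curve_length g {l/4..<l/2}
      + curve_length g {l/2..<3*l/4} + curve_length g {3*l/4..<l} = 4 * curve_length \<alpha> {0..l/4}"
    unfolding curve_length_quarters by (cases "curve_length \<alpha> {0..l/4}") simp_all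
  then show ?thesis
    using continuous_iff_ends_on_axes C1_iff_ends_and_tangents by blast
qed

end
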